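(* Let $\mathcal H$ be a hypothesis class with coVC dimension $k>0$. For any sample $S$ not realizable by $\mathcal H$ and any $h_1,\dots,h_T\in\mathcal H$, there is $(x,y)\in S$ such that $\frac1T\sum_{t=1}^T1[h_t(x)\ne y]\ge\frac1k$.
   Context: A sample is a finite sequence of examples $(x,y)\in\mathcal X\times\{\pm1\}$; it is realizable by $\mathcal H$ if some $h\in\mathcal H$ agrees with all its examples. A subsample of $S$ is a sample all of whose examples appear in $S$; the coVC dimension of $\mathcal H$ is the smallest $k$ such that every non-realizable sample has a non-realizable subsample of size at most $k$. *)

theory Defs
  imports Complex_Main
begin

text \<open>Labels in {+1,-1} are encoded as bool (True = +1, False = -1).
  A sample is a finite list of examples; a hypothesis class is a set of
  functions from the domain to the labels.\<close>

type_synonym 'a sample = "('a \<times> bool) list"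

definition realizable :: "('a \<Rightarrow> bool) set \<Rightarrow> 'a sample \<Rightarrow> bool" where
  "realizable H S \<longleftrightarrow> (\<exists>h\<in>H. \<forall>(x, y)\<in>set S. h x = y)"

definition subsample :: "'a sample \<Rightarrow> 'a sample \<Rightarrow> bool" where
  "subsample S' S \<longleftrightarrow> set S' \<subseteq> set S"

definition covc_bound :: "('a \<Rightarrow> bool) set \<Rightarrow> nat \<Rightarrow> bool" where
  "covc_bound H k \<longleftrightarrow> (\<forall>S. \<not> realizable H S \<longrightarrow>
      (\<exists>S'. subsample S' S \<and> length S' \<le> k \<and> \<not> realizable H S'))"

definition covc_dim :: "('a \<Rightarrow> bool) set \<Rightarrow> nat \<Rightarrow> bool" where
  "covc_dim H k \<longleftrightarrow> covc_bound H k \<and> (\<forall>j<k. \<not> covc_bound H j)"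

end

theory Submission
  imports Defs
begin

text \<open>A non-realizable subsample S' of size at most k is refuted by every hypothesis, so each of
  the T hypotheses errs on at least one of the at most k distinct examples of S'. Double
  counting these T errors, some example of S' carries at least T/k of them.\<close>

lemma covc_bound_obtains_small_refutation:
  assumes "covc_bound H k" and "\<not> realizable H S"
  obtains S' where "set S' \<subseteq> set S" and "card (set S') \<le> k" and "\<not> realizable H S'"
proof -
  obtain S' where "subsample S' S" "length S' \<le> k" "\<not> realizable H S'"
    using assms unfolding covc_bound_def by blast
  moreover have "card (set S') \<le> length S'" by (rule card_length)
  ultimately show thesis using that unfolding subsample_def by fastforce
qed

lemma not_realizable_nonempty:
  assumes "\<not> realizable H S" and "H \<noteq> {}"
  shows "set S \<noteq> {}"
  using assms unfolding realizable_def by auto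

lemma exists_heavy_row:
  fixes e :: "'p \<Rightarrow> 't \<Rightarrow> real"
  assumes "finite A" and "A \<noteq> {}" and "finite I"
    and covered: "\<And>t. t \<in> I \<Longrightarrow> 1 \<le> (\<Sum>p\<in>A. e p t)"
  shows "\<exists>p\<in>A. real (card I) \<le> real (card A) * (\<Sum>t\<in>I. e p t)"
proof -
  define row where "row p = (\<Sum>t\<in>I. e p t)" for p
  define m where "m = Max (row ` A)"
  have "m \<in> row ` A" unfolding m_def using assms(1,2) by (intro Max_in) auto
  then obtain p where "p \<in> A" "row p = m" by blast
  have "real (card I) = (\<Sum>t\<in>I. 1)" by simp
  also have "\<dots> \<le> (\<Sum>t\<in>I. \<Sum>p\<in>A. e p t)" using covered by (rule sum_mono)
  also have "\<dots> = (\<Sum>q\<in>A. row q)" unfolding row_def by (rule sum.swap)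
  also have "\<dots> \<le> real (card A) * m"
    unfolding m_def using assms(1) by (intro sum_bounded_above Max_ge) auto
  finally have "real (card I) \<le> real (card A) * row p" using \<open>row p = m\<close> by simp
  with \<open>p \<in> A\<close> show ?thesis unfolding row_def by blast
qed

theorem claim1:
  fixes H :: "('a \<Rightarrow> bool) set" and k :: nat and S :: "'a sample"
    and T :: nat and h :: "nat \<Rightarrow> 'a \<Rightarrow> bool"
  assumes "covc_dim H k" and "k > 0"
    and "\<not> realizable H S"
    and "T > 0" and "\<forall>t\<in>{1..T}. h t \<in> H"
  shows "\<exists>(x, y)\<in>set S.
           (\<Sum>t=1..T. if h t x \<noteq> y then 1 else 0 :: real) / real T \<ge> 1 / real k"
proof -
  define err where "err p t = (if h t (fst p) \<noteq> snd p then 1 else 0 :: real)" for p t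
  obtain S' where S': "set S' \<subseteq> set S" "card (set S') \<le> k" "\<not> realizable H S'"
    using assms(1,3) covc_bound_obtains_small_refutation unfolding covc_dim_def by blast
  have "h 1 \<in> H" using assms(4,5) by simp
  then have nonempty: "set S' \<noteq> {}" using not_realizable_nonempty[OF S'(3)] by blast
  have covered: "1 \<le> (\<Sum>p\<in>set S'. err p t)" if "t \<in> {1..T}" for t
  proof -
    have "h t \<in> H" using assms(5) that by blast
    then obtain p where "p \<in> set S'" and mistake: "h t (fst p) \<noteq> snd p"
      using S'(3) unfolding realizable_def by fastforce
    then have "err p t \<le> (\<Sum>q\<in>set S'. err q t)"
      by (intro member_le_sum) (simp_all add: err_def)
    with mistake show ?thesis by (simp add: err_def)
  qed
  obtain p where "p \<in> set S'"
    and heavy: "real T \<le> real (card (set S')) * (\<Sum>t=1..T. err p t)"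
    using exists_heavy_row[of "set S'" "{1..T}" err, OF finite_set nonempty finite_atLeastAtMost covered]
    by auto
  have "0 \<le> (\<Sum>t=1..T. err p t)" unfolding err_def by (rule sum_nonneg) simp
  then have "real (card (set S')) * (\<Sum>t=1..T. err p t) \<le> real k * (\<Sum>t=1..T. err p t)"
    by (rule mult_right_mono[rotated]) (use S'(2) in simp)
  with heavy have "real T \<le> real k * (\<Sum>t=1..T. err p t)" by (rule order_trans)
  then have "1 / real k \<le> (\<Sum>t=1..T. err p t) / real T"
    using assms(2,4) by (simp add: field_simps)
  then show ?thesis using \<open>p \<in> set S'\<close> S'(1) unfolding err_def by (cases p) auto
qed

end
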